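(* Let $A$ be an integral domain with field of fractions $K$, let $\mathcal P$ be a set of prime ideals of $A$, and let $B=\bigcap_{P\in\mathcal P}A_P$. The following are equivalent: (1) $B$ is a localization of $A$; (2) for every $x\in K\setminus A$ with $(A:_A x)\subseteq\bigcup_{P\in\mathcal P}P$, there is $P\in\mathcal P$ with $(A:_A x)\subseteq P$. Moreover, if each principal ideal of $A$ has only finitely many associated primes, then these are also equivalent to: (3) if $Q$ is an associated prime of a principal ideal of $A$ with $Q\subseteq\bigcup_{P\in\mathcal P}P$, then $Q\subseteq P$ for some $P\in\mathcal P$.
   Context: $(A:_A x)=\{a\in A: ax\in A\}$. An overring $B$ of $A$ is a localization of $A$ if $B=S^{-1}A$ for a multiplicatively closed set $S$ of nonzero elements of $A$. A prime $P$ of $A$ is an associated prime of an ideal $I$ if there is $a\in A$ such that $P$ is a minimal prime over $(I:_A a)=\{r\in A: ra\in I\}$. *)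

theory Defs
  imports "HOL-Computational_Algebra.Fraction_Field"
begin

text \<open>The integral domain A is a type of class idom; its field of fractions K is the type 'a fract.
  A is embedded into K via emb.\<close>

definition emb :: "'a::idom \<Rightarrow> 'a fract" where
  "emb a = Fract a 1"

definition Aset :: "'a::idom fract set" where
  "Aset = range emb"

definition is_ideal :: "'a::idom set \<Rightarrow> bool" where
  "is_ideal I \<longleftrightarrow> 0 \<in> I \<and> (\<forall>a\<in>I. \<forall>b\<in>I. a + b \<in> I) \<and> (\<forall>a\<in>I. \<forall>r. r * a \<in> I)"

definition is_prime_ideal :: "'a::idom set \<Rightarrow> bool" where
  "is_prime_ideal P \<longleftrightarrow> is_ideal P \<and> P \<noteq> UNIV \<and> (\<forall>a b. a * b \<in> P \<longrightarrow> a \<in> P \<or> b \<in> P)"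

definition principal_ideal :: "'a::idom \<Rightarrow> 'a set" where
  "principal_ideal c = {c * r | r. True}"

definition loc_at_prime :: "'a::idom set \<Rightarrow> 'a fract set" where
  "loc_at_prime P = {Fract a s | a s. s \<notin> P}"

definition mult_closed :: "'a::idom set \<Rightarrow> bool" where
  "mult_closed S \<longleftrightarrow> 1 \<in> S \<and> (\<forall>s\<in>S. \<forall>t\<in>S. s * t \<in> S)"

definition loc_set :: "'a::idom set \<Rightarrow> 'a fract set" where
  "loc_set S = {Fract a s | a s. s \<in> S}"

definition is_localization :: "'a::idom fract set \<Rightarrow> bool" where
  "is_localization B \<longleftrightarrow> (\<exists>S. mult_closed S \<and> 0 \<notin> S \<and> B = loc_set S)"

definition conductor :: "'a::idom fract \<Rightarrow> 'a set" where
  "conductor x = {a. emb a * x \<in> Aset}"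

definition colon :: "'a::idom set \<Rightarrow> 'a \<Rightarrow> 'a set" where
  "colon I a = {r. r * a \<in> I}"

definition minimal_prime_over :: "'a::idom set \<Rightarrow> 'a set \<Rightarrow> bool" where
  "minimal_prime_over P J \<longleftrightarrow> is_prime_ideal P \<and> J \<subseteq> P \<and>
     (\<forall>Q. is_prime_ideal Q \<and> J \<subseteq> Q \<and> Q \<subseteq> P \<longrightarrow> Q = P)"

definition associated_prime :: "'a::idom set \<Rightarrow> 'a set \<Rightarrow> bool" where
  "associated_prime P I \<longleftrightarrow> (\<exists>a. minimal_prime_over P (colon I a))"

end

theory Submission
  imports Defs
begin

text \<open>
  The conductor (A :_A x) decides membership in localizations: x \<in> A_P iff the conductor is
  not contained in P, and x \<in> S^{-1}A iff the conductor meets S. Hence B is the localization at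
  S = A - \<Union>\<P> exactly when (2) holds; and if B = T^{-1}A at all, every t \<in> T is a unit of B, so
  T avoids \<Union>\<P> and (2) follows.

  Writing x = a/c, the conductor is (cA :_A a), whose minimal primes are associated primes of
  cA. Assume these are finitely many. For (3) \<Longrightarrow> (2): if no minimal prime of the conductor lies
  in \<Union>\<P>, a product of witnesses lies in all of them but in no P, and some power of it lies in
  the conductor. For (2) \<Longrightarrow> (3): multiplying a by a suitable t \<notin> Q makes every minimal prime of
  (cA :_A at) contain Q; applying (2) to at/c gives P \<in> \<P> above such a minimal prime.
\<close>

lemma ideal_zero: "is_ideal I \<Longrightarrow> 0 \<in> I"
  by (simp add: is_ideal_def)

lemma ideal_add: "is_ideal I \<Longrightarrow> a \<in> I \<Longrightarrow> b \<in> I \<Longrightarrow> a + b \<in> I"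
  by (simp add: is_ideal_def)

lemma ideal_mult_left: "is_ideal I \<Longrightarrow> a \<in> I \<Longrightarrow> r * a \<in> I"
  by (simp add: is_ideal_def)

lemma ideal_mult_right: "is_ideal I \<Longrightarrow> a \<in> I \<Longrightarrow> a * r \<in> I"
  by (metis ideal_mult_left mult.commute)

lemma prime_ideal_is_ideal: "is_prime_ideal P \<Longrightarrow> is_ideal P"
  by (simp add: is_prime_ideal_def)

lemma one_not_mem_prime_ideal:
  assumes "is_prime_ideal P"
  shows "1 \<notin> P"
proof
  assume "1 \<in> P"
  then have "r \<in> P" for r
    using ideal_mult_right[OF prime_ideal_is_ideal[OF assms], of 1 r] by simp
  with assms show False
    by (auto simp: is_prime_ideal_def)
qed

lemma prime_ideal_mult_iff: "is_prime_ideal P \<Longrightarrow> a * b \<in> P \<longleftrightarrow> a \<in> P \<or> b \<in> P"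
  by (auto simp: is_prime_ideal_def intro: ideal_mult_left ideal_mult_right)

lemma prime_ideal_power_imp_mem:
  assumes "is_prime_ideal P" "a ^ m \<in> P"
  shows "a \<in> P"
  using assms(2)
  by (induction m) (auto simp: one_not_mem_prime_ideal[OF assms(1)] prime_ideal_mult_iff[OF assms(1)])

lemma zero_ideal_is_prime: "is_prime_ideal {0::'a::idom}"
  by (auto simp: is_prime_ideal_def is_ideal_def) (metis UNIV_I singletonD zero_neq_one)

lemma colon_is_ideal: "is_ideal I \<Longrightarrow> is_ideal (colon I a)"
  unfolding is_ideal_def colon_def by (auto simp: distrib_right mult.assoc)

lemma principal_ideal_is_ideal: "is_ideal (principal_ideal c)"
  unfolding is_ideal_def principal_ideal_def
proof (intro conjI ballI allI)
  show "0 \<in> {c * r |r. True}"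
    by (metis (mono_tags) mult_zero_right mem_Collect_eq)
next
  fix a b assume "a \<in> {c * r |r. True}" "b \<in> {c * r |r. True}"
  then show "a + b \<in> {c * r |r. True}"
    by (auto simp flip: distrib_left)
next
  fix a r assume "a \<in> {c * r |r. True}"
  then show "r * a \<in> {c * r |r. True}"
    by (auto simp: mult.left_commute)
qed

lemma colon_colon: "colon (colon I a) t = colon I (a * t)"
  by (simp add: colon_def ac_simps)

lemma colon_subset_prime_ideal: "is_prime_ideal Q \<Longrightarrow> I \<subseteq> Q \<Longrightarrow> t \<notin> Q \<Longrightarrow> colon I t \<subseteq> Q"
  by (auto simp: colon_def prime_ideal_mult_iff)

lemma ideal_Union_chain:
  assumes "\<C> \<noteq> {}" "\<forall>X\<in>\<C>. \<forall>Y\<in>\<C>. X \<subseteq> Y \<or> Y \<subseteq> X" "\<forall>X\<in>\<C>. is_ideal X"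
  shows "is_ideal (\<Union>\<C>)"
  unfolding is_ideal_def
proof (intro conjI ballI allI)
  show "0 \<in> \<Union>\<C>"
    using assms(1,3) ideal_zero by blast
next
  fix a b assume "a \<in> \<Union>\<C>" "b \<in> \<Union>\<C>"
  then obtain X Y where "X \<in> \<C>" "Y \<in> \<C>" "a \<in> X" "b \<in> Y"
    by blast
  with assms(2,3) show "a + b \<in> \<Union>\<C>"
    by (metis UnionI ideal_add subsetD)
next
  fix a r assume "a \<in> \<Union>\<C>"
  with assms(3) show "r * a \<in> \<Union>\<C>"
    using ideal_mult_left by blast
qed

lemma prime_ideal_Inter_chain:
  assumes "\<C> \<noteq> {}" "\<forall>X\<in>\<C>. \<forall>Y\<in>\<C>. X \<subseteq> Y \<or> Y \<subseteq> X" "\<forall>X\<in>\<C>. is_prime_ideal X"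
  shows "is_prime_ideal (\<Inter>\<C>)"
  unfolding is_prime_ideal_def
proof (intro conjI allI impI)
  have "\<forall>X\<in>\<C>. is_ideal X"
    using assms(3) prime_ideal_is_ideal by blast
  then show "is_ideal (\<Inter>\<C>)"
    by (auto simp: is_ideal_def)
  show "\<Inter>\<C> \<noteq> UNIV"
    using assms(1,3) one_not_mem_prime_ideal by blast
next
  fix a b assume ab: "a * b \<in> \<Inter>\<C>"
  show "a \<in> \<Inter>\<C> \<or> b \<in> \<Inter>\<C>"
  proof (rule ccontr)
    assume "\<not> ?thesis"
    then obtain X Y where "X \<in> \<C>" "Y \<in> \<C>" "a \<notin> X" "b \<notin> Y"
      by blast
    with assms(2,3) ab show False
      by (metis InterE prime_ideal_mult_iff subsetD)
  qed
qed

lemma ideal_adjoin: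
  assumes "is_ideal M"
  shows "is_ideal {m + r * x | m r. m \<in> M}"
  unfolding is_ideal_def
proof (intro conjI ballI allI)
  show "0 \<in> {m + r * x | m r. m \<in> M}"
    using ideal_zero[OF assms] by (metis (mono_tags, lifting) add_0 mem_Collect_eq mult_zero_left)
next
  fix p q assume "p \<in> {m + r * x | m r. m \<in> M}" "q \<in> {m + r * x | m r. m \<in> M}"
  then obtain m1 r1 m2 r2 where "p = m1 + r1 * x" "q = m2 + r2 * x" "m1 \<in> M" "m2 \<in> M"
    by blast
  then have "p + q = (m1 + m2) + (r1 + r2) * x" "m1 + m2 \<in> M"
    using ideal_add[OF assms] by (auto simp: algebra_simps)
  then show "p + q \<in> {m + r * x | m r. m \<in> M}"
    by blast
next
  fix p s assume "p \<in> {m + r * x | m r. m \<in> M}"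
  then obtain m r where "p = m + r * x" "m \<in> M"
    by blast
  then have "s * p = s * m + (s * r) * x" "s * m \<in> M"
    using ideal_mult_left[OF assms] by (auto simp: algebra_simps)
  then show "s * p \<in> {m + r * x | m r. m \<in> M}"
    by blast
qed

lemma prime_ideal_disjoint_mult_closed:
  assumes I: "is_ideal I" and T: "mult_closed T" and disj: "I \<inter> T = {}"
  obtains P where "is_prime_ideal P" "I \<subseteq> P" "P \<inter> T = {}"
proof -
  define \<A> where "\<A> = {J. is_ideal J \<and> I \<subseteq> J \<and> J \<inter> T = {}}"
  have "\<exists>M\<in>\<A>. \<forall>X\<in>\<A>. M \<subseteq> X \<longrightarrow> X = M"
  proof (rule subset_Zorn_nonempty)
    show "\<A> \<noteq> {}"
      using I disj by (auto simp: \<A>_def)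
  next
    fix \<C> assume "\<C> \<noteq> {}" "subset.chain \<A> \<C>"
    then show "\<Union>\<C> \<in> \<A>"
      using ideal_Union_chain[of \<C>] by (auto simp: \<A>_def subset_chain_def)
  qed
  then obtain M where "M \<in> \<A>" and M_max: "\<And>X. X \<in> \<A> \<Longrightarrow> M \<subseteq> X \<Longrightarrow> X = M"
    by blast
  then have M: "is_ideal M" "I \<subseteq> M" "M \<inter> T = {}"
    by (auto simp: \<A>_def)
  have escape: "\<exists>m\<in>M. \<exists>r. m + r * x \<in> T" if "x \<notin> M" for x
  proof (rule ccontr)
    assume "\<not> ?thesis"
    then have "{m + r * x | m r. m \<in> M} \<in> \<A>"
      using ideal_adjoin[OF M(1)] M(2) unfolding \<A>_def by (force intro: exI[of _ 0])
    moreover have "M \<subseteq> {m + r * x | m r. m \<in> M}"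
      by (force intro: exI[of _ 0])
    moreover have "x \<in> {m + r * x | m r. m \<in> M}"
      using ideal_zero[OF M(1)] by (force intro: exI[of _ 1])
    ultimately show False
      using M_max that by blast
  qed
  have "is_prime_ideal M"
    unfolding is_prime_ideal_def
  proof (intro conjI allI impI)
    show "is_ideal M" "M \<noteq> UNIV"
      using M T by (auto simp: mult_closed_def)
  next
    fix a b assume ab: "a * b \<in> M"
    show "a \<in> M \<or> b \<in> M"
    proof (rule ccontr)
      assume "\<not> ?thesis"
      then obtain m1 r1 m2 r2 where
        m: "m1 \<in> M" "m2 \<in> M" and T12: "m1 + r1 * a \<in> T" "m2 + r2 * b \<in> T"
        using escape by meson
      have "(m1 + r1 * a) * (m2 + r2 * b) = m1 * (m2 + r2 * b) + m2 * (r1 * a) + (r1 * r2) * (a * b)"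
        by (simp add: algebra_simps)
      also have "\<dots> \<in> M"
        using m ab ideal_add[OF M(1)] ideal_mult_left[OF M(1)] ideal_mult_right[OF M(1)] by metis
      finally show False
        using T12 T M(3) by (auto simp: mult_closed_def)
    qed
  qed
  with M that show thesis
    by blast
qed

lemma exists_minimal_prime_below:
  assumes "is_prime_ideal P" "J \<subseteq> P"
  obtains Q where "minimal_prime_over Q J" "Q \<subseteq> P"
proof -
  define \<S> where "\<S> = {Q. is_prime_ideal Q \<and> J \<subseteq> Q \<and> Q \<subseteq> P}"
  \<comment> \<open>Zorn's lemma for reverse inclusion, applied to the complements\<close>
  have "\<exists>M\<in>uminus ` \<S>. \<forall>X\<in>uminus ` \<S>. M \<subseteq> X \<longrightarrow> X = M"
  proof (rule subset_Zorn_nonempty)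
    show "uminus ` \<S> \<noteq> {}"
      using assms by (auto simp: \<S>_def)
  next
    fix \<C> assume "\<C> \<noteq> {}" "subset.chain (uminus ` \<S>) \<C>"
    then have ne: "uminus ` \<C> \<noteq> {}" and sub: "uminus ` \<C> \<subseteq> \<S>"
      and "\<forall>X\<in>uminus ` \<C>. \<forall>Y\<in>uminus ` \<C>. X \<subseteq> Y \<or> Y \<subseteq> X"
      by (auto simp: subset_chain_def)
    then have "is_prime_ideal (\<Inter>(uminus ` \<C>))"
      using prime_ideal_Inter_chain[of "uminus ` \<C>"] by (auto simp: \<S>_def)
    moreover have "J \<subseteq> \<Inter>(uminus ` \<C>)" "\<Inter>(uminus ` \<C>) \<subseteq> P"
      using ne sub by (auto simp: \<S>_def)
    ultimately have "\<Inter>(uminus ` \<C>) \<in> \<S>"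
      by (simp add: \<S>_def)
    moreover have "\<Union>\<C> = - \<Inter>(uminus ` \<C>)"
      by auto
    ultimately show "\<Union>\<C> \<in> uminus ` \<S>"
      by blast
  qed
  then obtain Q where Q: "Q \<in> \<S>" and max: "\<forall>X\<in>uminus ` \<S>. - Q \<subseteq> X \<longrightarrow> X = - Q"
    by blast
  have Q_min: "Q' = Q" if "Q' \<in> \<S>" "Q' \<subseteq> Q" for Q'
    using max that by (metis Compl_subset_Compl_iff compl_eq_compl_iff imageI)
  have "minimal_prime_over Q J"
    using Q Q_min unfolding minimal_prime_over_def \<S>_def by blast
  with Q that show thesis
    by (auto simp: \<S>_def)
qed

lemma minimal_prime_over_witness:
  assumes Q: "minimal_prime_over Q I" and I: "is_ideal I" and r: "r \<in> Q"
  obtains u m where "u \<notin> Q" "u * r ^ m \<in> I"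
proof (rule ccontr)
  assume no: "\<not> thesis"
  have Q_prime: "is_prime_ideal Q"
    using Q by (simp add: minimal_prime_over_def)
  define T where "T = {u * r ^ m | u m. u \<notin> Q}"
  have "mult_closed T"
    unfolding mult_closed_def
  proof (intro conjI ballI)
    have "1 * r ^ 0 \<in> T"
      using one_not_mem_prime_ideal[OF Q_prime] unfolding T_def by blast
    then show "1 \<in> T"
      by simp
  next
    fix s t assume "s \<in> T" "t \<in> T"
    then obtain u m u' m' where "s = u * r ^ m" "t = u' * r ^ m'" "u \<notin> Q" "u' \<notin> Q"
      by (auto simp: T_def)
    then have "s * t = (u * u') * r ^ (m + m')" "u * u' \<notin> Q"
      by (auto simp: algebra_simps power_add prime_ideal_mult_iff[OF Q_prime])
    then show "s * t \<in> T"
      by (auto simp: T_def)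
  qed
  moreover have "I \<inter> T = {}"
    using no that by (auto simp: T_def)
  ultimately obtain P where P: "is_prime_ideal P" "I \<subseteq> P" "P \<inter> T = {}"
    using prime_ideal_disjoint_mult_closed[OF I] by blast
  have "- Q \<subseteq> T"
    by (force simp: T_def intro: exI[of _ 0])
  then have "P = Q"
    using Q P unfolding minimal_prime_over_def by blast
  moreover have "r \<in> T"
    using one_not_mem_prime_ideal[OF Q_prime] by (force simp: T_def intro: exI[of _ 1])
  ultimately show False
    using P(3) r by blast
qed

lemma power_mem_if_mem_minimal_primes:
  fixes q :: "'a::idom"
  assumes I: "is_ideal I" and q: "\<And>Q. minimal_prime_over Q I \<Longrightarrow> q \<in> Q"
  shows "\<exists>m. q ^ m \<in> I"
proof (rule ccontr)
  assume no: "\<not> ?thesis"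
  have "mult_closed (range (power q))"
    unfolding mult_closed_def
  proof (intro conjI ballI)
    have "q ^ 0 \<in> range (power q)"
      by (rule rangeI)
    then show "1 \<in> range (power q)"
      by simp
  next
    fix s t assume "s \<in> range (power q)" "t \<in> range (power q)"
    then obtain i j where "s = q ^ i" "t = q ^ j"
      by blast
    moreover have "q ^ (i + j) \<in> range (power q)"
      by (rule rangeI)
    ultimately show "s * t \<in> range (power q)"
      by (simp add: power_add)
  qed
  moreover have "I \<inter> range (power q) = {}"
    using no by blast
  ultimately obtain P where P: "is_prime_ideal P" "I \<subseteq> P" "P \<inter> range (power q) = {}"
    using prime_ideal_disjoint_mult_closed[OF I] by blast
  then obtain Q where "minimal_prime_over Q I" "Q \<subseteq> P"
    using exists_minimal_prime_below by blast
  moreover have "q ^ 1 \<in> range (power q)"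
    by (rule rangeI)
  ultimately show False
    using q P(3) by auto
qed

lemma Inter_not_subset_Union_prime_ideals:
  assumes "finite \<M>" "\<forall>Q\<in>\<M>. is_ideal Q \<and> \<not> Q \<subseteq> \<Union>\<P>" and \<P>: "\<forall>P\<in>\<P>. is_prime_ideal P"
  shows "\<not> \<Inter>\<M> \<subseteq> \<Union>\<P>"
  using assms(1,2)
proof (induction \<M> rule: finite_induct)
  case empty
  have "1 \<notin> \<Union>\<P>"
    using \<P> one_not_mem_prime_ideal by blast
  then show ?case
    by auto
next
  case (insert Q \<M>)
  then have IH: "\<not> \<Inter>\<M> \<subseteq> \<Union>\<P>" and Q: "is_ideal Q" "\<not> Q \<subseteq> \<Union>\<P>"
    and \<M>: "\<forall>Q\<in>\<M>. is_ideal Q"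
    by simp_all
  obtain q where q: "q \<in> \<Inter>\<M>" "q \<notin> \<Union>\<P>"
    using IH by blast
  obtain q' where q': "q' \<in> Q" "q' \<notin> \<Union>\<P>"
    using Q(2) by blast
  have "q * q' \<in> \<Inter>(insert Q \<M>)"
    using q(1) q'(1) Q(1) \<M> by (auto intro: ideal_mult_left ideal_mult_right)
  moreover have "q * q' \<notin> \<Union>\<P>"
    using q(2) q'(2) \<P> prime_ideal_mult_iff by blast
  ultimately show ?case
    by blast
qed

lemma exists_colon_not_subset_prime_ideals:
  assumes Q: "minimal_prime_over Q I" and I: "is_ideal I"
    and "finite \<G>" "\<forall>Q'\<in>\<G>. is_prime_ideal Q' \<and> \<not> Q \<subseteq> Q'"
  shows "\<exists>t. t \<notin> Q \<and> (\<forall>Q'\<in>\<G>. \<not> colon I t \<subseteq> Q')"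
  using assms(3,4)
proof (induction \<G> rule: finite_induct)
  case empty
  have "1 \<notin> Q"
    using Q one_not_mem_prime_ideal by (auto simp: minimal_prime_over_def)
  then show ?case
    by blast
next
  case (insert Q' \<G>)
  then obtain t where t: "t \<notin> Q" "\<forall>Q''\<in>\<G>. \<not> colon I t \<subseteq> Q''"
    by auto
  from insert.prems obtain r where r: "r \<in> Q" "r \<notin> Q'" and Q': "is_prime_ideal Q'"
    by auto
  obtain u m where u: "u \<notin> Q" "u * r ^ m \<in> I"
    using minimal_prime_over_witness[OF Q I r(1)] by blast
  have "t * u \<notin> Q"
    using t(1) u(1) Q prime_ideal_mult_iff by (auto simp: minimal_prime_over_def)
  moreover have "colon I t \<subseteq> colon I (t * u)"
    using ideal_mult_right[OF I] by (auto simp: colon_def mult.assoc[symmetric])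
  moreover have "r ^ m \<in> colon I (t * u)"
    using ideal_mult_left[OF I u(2), of t] by (simp add: colon_def ac_simps)
  moreover have "r ^ m \<notin> Q'"
    using r(2) prime_ideal_power_imp_mem[OF Q'] by blast
  ultimately show ?case
    using t(2) by blast
qed

lemma mem_Aset_iff_one_mem_conductor: "x \<in> Aset \<longleftrightarrow> 1 \<in> conductor x"
  by (simp add: conductor_def emb_def One_fract_def[symmetric])

lemma conductor_Fract:
  assumes "c \<noteq> 0"
  shows "conductor (Fract a c) = colon (principal_ideal c) a"
proof -
  have "emb r * Fract a c \<in> Aset \<longleftrightarrow> r * a \<in> principal_ideal c" for r
  proof -
    have "emb r * Fract a c \<in> Aset \<longleftrightarrow> (\<exists>b. Fract (r * a) c = Fract b 1)"
      by (auto simp: emb_def Aset_def)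
    also have "\<dots> \<longleftrightarrow> (\<exists>b. r * a = c * b)"
      using assms by (simp add: eq_fract mult.commute)
    finally show ?thesis
      by (simp add: principal_ideal_def)
  qed
  then show ?thesis
    by (auto simp: conductor_def colon_def)
qed

lemma denominator_mem_conductor: "s \<noteq> 0 \<Longrightarrow> s \<in> conductor (Fract b s)"
  by (auto simp: conductor_Fract colon_def principal_ideal_def mult.commute)

lemma conductor_has_nonzero: "\<exists>s\<in>conductor x. s \<noteq> 0"
  by (cases x) (auto intro: denominator_mem_conductor)

lemma mem_conductor_imp_eq_Fract:
  assumes s: "s \<in> conductor x" "s \<noteq> 0"
  obtains b where "x = Fract b s"
proof -
  obtain a c where x: "x = Fract a c" "c \<noteq> 0"
    by (cases x)
  with s obtain b where "s * a = c * b"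
    by (auto simp: conductor_Fract colon_def principal_ideal_def)
  with x s have "x = Fract b s"
    by (simp add: eq_fract mult.commute)
  then show thesis
    by (rule that)
qed

lemma mem_loc_set_iff:
  assumes "0 \<notin> S"
  shows "x \<in> loc_set S \<longleftrightarrow> (\<exists>s\<in>conductor x. s \<in> S)"
proof
  assume "x \<in> loc_set S"
  then obtain b s where "x = Fract b s" "s \<in> S"
    by (auto simp: loc_set_def)
  moreover from assms \<open>s \<in> S\<close> have "s \<noteq> 0"
    by auto
  ultimately show "\<exists>s\<in>conductor x. s \<in> S"
    using denominator_mem_conductor by blast
next
  assume "\<exists>s\<in>conductor x. s \<in> S"
  then obtain s where s: "s \<in> conductor x" "s \<in> S"
    by blast
  have "s \<noteq> 0"
    using assms s(2) by auto
  with s(1) obtain b where "x = Fract b s"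
    by (rule mem_conductor_imp_eq_Fract)
  with s show "x \<in> loc_set S"
    by (auto simp: loc_set_def)
qed

lemma mem_loc_at_prime_iff:
  assumes "is_prime_ideal P"
  shows "x \<in> loc_at_prime P \<longleftrightarrow> \<not> conductor x \<subseteq> P"
proof -
  have "0 \<notin> - P"
    using ideal_zero[OF prime_ideal_is_ideal[OF assms]] by simp
  moreover have "loc_at_prime P = loc_set (- P)"
    by (auto simp: loc_at_prime_def loc_set_def)
  ultimately have "x \<in> loc_at_prime P \<longleftrightarrow> (\<exists>s\<in>conductor x. s \<in> - P)"
    by (simp add: mem_loc_set_iff)
  then show ?thesis
    by auto
qed

lemma inverse_not_mem_loc_at_prime:
  assumes "is_prime_ideal P" "t \<in> P" "t \<noteq> 0"
  shows "Fract 1 t \<notin> loc_at_prime P"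
proof -
  have "conductor (Fract 1 t) = principal_ideal t"
    using assms(3) by (simp add: conductor_Fract colon_def)
  also have "\<dots> \<subseteq> P"
    using assms(2) ideal_mult_right[OF prime_ideal_is_ideal[OF assms(1)]]
    by (auto simp: principal_ideal_def)
  finally show ?thesis
    using mem_loc_at_prime_iff[OF assms(1)] by blast
qed

lemma associated_prime_zero_ideal:
  assumes "associated_prime Q (principal_ideal (0::'a::idom))"
  shows "Q = {0}"
proof -
  obtain a where Q: "minimal_prime_over Q (colon {0} a)"
    using assms by (auto simp: associated_prime_def principal_ideal_def)
  then have Q_prime: "is_prime_ideal Q"
    by (simp add: minimal_prime_over_def)
  have "a \<noteq> 0"
  proof
    assume "a = 0"
    then have "1 \<in> colon {0} a"
      by (simp add: colon_def)
    with Q one_not_mem_prime_ideal[OF Q_prime] show False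
      by (auto simp: minimal_prime_over_def)
  qed
  then have "colon {0} a = {0}"
    by (auto simp: colon_def)
  with Q have "\<forall>Q'. is_prime_ideal Q' \<and> {0} \<subseteq> Q' \<and> Q' \<subseteq> Q \<longrightarrow> Q' = Q"
    by (simp add: minimal_prime_over_def)
  moreover have "{0} \<subseteq> Q"
    using ideal_zero[OF prime_ideal_is_ideal[OF Q_prime]] by simp
  ultimately show ?thesis
    using zero_ideal_is_prime by blast
qed

definition conductors_packed :: "'a::idom set set \<Rightarrow> bool" where
  "conductors_packed \<P> \<longleftrightarrow>
     (\<forall>x. x \<notin> Aset \<and> conductor x \<subseteq> \<Union>\<P> \<longrightarrow> (\<exists>P\<in>\<P>. conductor x \<subseteq> P))"

definition assoc_primes_packed :: "'a::idom set set \<Rightarrow> bool" where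
  "assoc_primes_packed \<P> \<longleftrightarrow>
     (\<forall>Q. (\<exists>c. associated_prime Q (principal_ideal c)) \<and> Q \<subseteq> \<Union>\<P> \<longrightarrow> (\<exists>P\<in>\<P>. Q \<subseteq> P))"

lemma localization_imp_conductors_packed:
  fixes \<P> :: "'a::idom set set"
  assumes \<P>: "\<forall>P\<in>\<P>. is_prime_ideal P" and loc: "is_localization (\<Inter>P\<in>\<P>. loc_at_prime P)"
  shows "conductors_packed \<P>"
  unfolding conductors_packed_def
proof (intro allI impI)
  fix x assume "x \<notin> Aset \<and> conductor x \<subseteq> \<Union>\<P>"
  then have x_sub: "conductor x \<subseteq> \<Union>\<P>"
    by blast
  obtain T where T: "0 \<notin> T" "(\<Inter>P\<in>\<P>. loc_at_prime P) = loc_set T"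
    using loc by (auto simp: is_localization_def)
  show "\<exists>P\<in>\<P>. conductor x \<subseteq> P"
  proof (rule ccontr)
    assume "\<not> ?thesis"
    with \<P> have "x \<in> (\<Inter>P\<in>\<P>. loc_at_prime P)"
      by (simp add: mem_loc_at_prime_iff)
    then have "x \<in> loc_set T"
      using T(2) by simp
    then obtain t where t: "t \<in> conductor x" "t \<in> T"
      using mem_loc_set_iff[OF T(1)] by blast
    with x_sub obtain P where P: "P \<in> \<P>" "t \<in> P"
      by blast
    \<comment> \<open>a denominator from T is a unit of the localization, but not of A_P\<close>
    have "Fract 1 t \<in> loc_set T"
      using t(2) by (auto simp: loc_set_def)
    then have "Fract 1 t \<in> loc_at_prime P"
      using T(2) P(1) by blast
    moreover have "t \<noteq> 0"
      using t(2) T(1) by auto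
    ultimately show False
      using inverse_not_mem_loc_at_prime[of P t] \<P> P by blast
  qed
qed

lemma conductors_packed_imp_localization:
  fixes \<P> :: "'a::idom set set"
  assumes \<P>: "\<forall>P\<in>\<P>. is_prime_ideal P" and packed: "conductors_packed \<P>"
  shows "is_localization (\<Inter>P\<in>\<P>. loc_at_prime P)"
proof -
  define S where "S = {s. s \<noteq> 0 \<and> s \<notin> \<Union>\<P>}"
  have S: "mult_closed S" "0 \<notin> S"
    using \<P> by (auto simp: S_def mult_closed_def one_not_mem_prime_ideal prime_ideal_mult_iff)
  have "x \<in> (\<Inter>P\<in>\<P>. loc_at_prime P) \<longleftrightarrow> x \<in> loc_set S" for x
  proof
    assume x: "x \<in> (\<Inter>P\<in>\<P>. loc_at_prime P)"
    have not_sub: "\<not> conductor x \<subseteq> \<Union>\<P>"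
    proof (cases "x \<in> Aset")
      case True
      then show ?thesis
        using \<P> one_not_mem_prime_ideal mem_Aset_iff_one_mem_conductor by blast
    next
      case False
      with x \<P> packed show ?thesis
        by (auto simp: conductors_packed_def mem_loc_at_prime_iff)
    qed
    have "\<exists>s\<in>conductor x. s \<in> S"
    proof (cases "\<P> = {}")
      case True
      then show ?thesis
        using conductor_has_nonzero by (simp add: S_def)
    next
      case False
      then have "0 \<in> \<Union>\<P>"
        using \<P> ideal_zero prime_ideal_is_ideal by blast
      obtain s where "s \<in> conductor x" "s \<notin> \<Union>\<P>"
        using not_sub by blast
      moreover from \<open>0 \<in> \<Union>\<P>\<close> \<open>s \<notin> \<Union>\<P>\<close> have "s \<noteq> 0"
        by blast
      ultimately show ?thesis
        by (auto simp: S_def)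
    qed
    then show "x \<in> loc_set S"
      using mem_loc_set_iff[OF S(2)] by blast
  next
    assume "x \<in> loc_set S"
    then obtain s where s: "s \<in> conductor x" "s \<in> S"
      using mem_loc_set_iff[OF S(2)] by blast
    show "x \<in> (\<Inter>P\<in>\<P>. loc_at_prime P)"
    proof
      fix P assume "P \<in> \<P>"
      with s have "\<not> conductor x \<subseteq> P"
        by (auto simp: S_def)
      with \<P> \<open>P \<in> \<P>\<close> show "x \<in> loc_at_prime P"
        by (simp add: mem_loc_at_prime_iff)
    qed
  qed
  with S show ?thesis
    unfolding is_localization_def by blast
qed

lemma conductors_packed_imp_assoc_primes_packed:
  fixes \<P> :: "'a::idom set set"
  assumes \<P>: "\<forall>P\<in>\<P>. is_prime_ideal P"
    and fin: "\<forall>c::'a. finite {Q. associated_prime Q (principal_ideal c)}"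
    and packed: "conductors_packed \<P>"
  shows "assoc_primes_packed \<P>"
  unfolding assoc_primes_packed_def
proof (intro allI impI)
  fix Q :: "'a set"
  assume "(\<exists>c. associated_prime Q (principal_ideal c)) \<and> Q \<subseteq> \<Union>\<P>"
  then obtain c a where Q: "minimal_prime_over Q (colon (principal_ideal c) a)"
    and Q_sub: "Q \<subseteq> \<Union>\<P>"
    by (auto simp: associated_prime_def)
  show "\<exists>P\<in>\<P>. Q \<subseteq> P"
  proof (cases "c = 0")
    case True
    then have "Q = {0}"
      using Q associated_prime_zero_ideal by (auto simp: associated_prime_def)
    with Q_sub obtain P where "P \<in> \<P>"
      by blast
    with \<P> \<open>Q = {0}\<close> show ?thesis
      using ideal_zero prime_ideal_is_ideal by blast
  next
    case False
    define I where "I = colon (principal_ideal c) a"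
    have I: "is_ideal I" "minimal_prime_over Q I"
      using Q by (simp_all add: I_def colon_is_ideal principal_ideal_is_ideal)
    then have Q_prime: "is_prime_ideal Q"
      by (simp add: minimal_prime_over_def)
    define \<G> where "\<G> = {Q'. associated_prime Q' (principal_ideal c) \<and> \<not> Q \<subseteq> Q'}"
    have "finite \<G>"
      using fin by (auto simp: \<G>_def)
    moreover have "\<forall>Q'\<in>\<G>. is_prime_ideal Q' \<and> \<not> Q \<subseteq> Q'"
      by (auto simp: \<G>_def associated_prime_def minimal_prime_over_def)
    ultimately obtain t where t: "t \<notin> Q" "\<forall>Q'\<in>\<G>. \<not> colon I t \<subseteq> Q'"
      using exists_colon_not_subset_prime_ideals[OF I(2) I(1)] by blast
    define J where "J = colon I t"
    have J_eq: "conductor (Fract (a * t) c) = J"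
      using False by (simp add: J_def I_def conductor_Fract colon_colon)
    have "J \<subseteq> Q"
      unfolding J_def using I(2) t(1)
      by (intro colon_subset_prime_ideal[OF Q_prime]) (simp_all add: minimal_prime_over_def)
    then have "1 \<notin> J"
      using one_not_mem_prime_ideal[OF Q_prime] by blast
    then have "Fract (a * t) c \<notin> Aset"
      by (simp add: mem_Aset_iff_one_mem_conductor J_eq)
    moreover have "conductor (Fract (a * t) c) \<subseteq> \<Union>\<P>"
      using \<open>J \<subseteq> Q\<close> Q_sub J_eq by simp
    ultimately have "\<exists>P\<in>\<P>. conductor (Fract (a * t) c) \<subseteq> P"
      using packed unfolding conductors_packed_def by blast
    then obtain P where P: "P \<in> \<P>" "J \<subseteq> P"
      unfolding J_eq by blast
    then obtain Q'' where Q'': "minimal_prime_over Q'' J" "Q'' \<subseteq> P"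
      using \<P> exists_minimal_prime_below by blast
    then have "associated_prime Q'' (principal_ideal c)"
      by (auto simp: associated_prime_def J_def I_def colon_colon)
    moreover have "J \<subseteq> Q''"
      using Q''(1) by (simp add: minimal_prime_over_def)
    ultimately have "Q \<subseteq> Q''"
      using t(2) unfolding \<G>_def J_def by blast
    with Q'' P show ?thesis
      by blast
  qed
qed

lemma assoc_primes_packed_imp_conductors_packed:
  fixes \<P> :: "'a::idom set set"
  assumes \<P>: "\<forall>P\<in>\<P>. is_prime_ideal P"
    and fin: "\<forall>c::'a. finite {Q. associated_prime Q (principal_ideal c)}"
    and packed: "assoc_primes_packed \<P>"
  shows "conductors_packed \<P>"
  unfolding conductors_packed_def
proof (intro allI impI)
  fix x :: "'a fract"
  assume "x \<notin> Aset \<and> conductor x \<subseteq> \<Union>\<P>"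
  then have x_sub: "conductor x \<subseteq> \<Union>\<P>"
    by blast
  obtain a c where x: "x = Fract a c" "c \<noteq> 0"
    by (cases x)
  define I where "I = colon (principal_ideal c) a"
  have I: "is_ideal I" "conductor x = I"
    using x by (simp_all add: I_def colon_is_ideal principal_ideal_is_ideal conductor_Fract)
  define \<M> where "\<M> = {Q. minimal_prime_over Q I}"
  have \<M>_assoc: "\<M> \<subseteq> {Q. associated_prime Q (principal_ideal c)}"
    by (auto simp: \<M>_def I_def associated_prime_def)
  show "\<exists>P\<in>\<P>. conductor x \<subseteq> P"
  proof (cases "\<exists>Q\<in>\<M>. Q \<subseteq> \<Union>\<P>")
    case True
    then obtain Q P where "Q \<in> \<M>" "P \<in> \<P>" "Q \<subseteq> P"
      using packed \<M>_assoc unfolding assoc_primes_packed_def by blast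
    then show ?thesis
      using I(2) by (auto simp: \<M>_def minimal_prime_over_def)
  next
    case False
    have "finite \<M>"
      using fin finite_subset[OF \<M>_assoc] by blast
    moreover have "\<forall>Q\<in>\<M>. is_ideal Q \<and> \<not> Q \<subseteq> \<Union>\<P>"
      using False by (auto simp: \<M>_def minimal_prime_over_def prime_ideal_is_ideal)
    ultimately obtain q where q: "q \<in> \<Inter>\<M>" "q \<notin> \<Union>\<P>"
      using Inter_not_subset_Union_prime_ideals[OF _ _ \<P>] by blast
    then have "\<And>Q. minimal_prime_over Q I \<Longrightarrow> q \<in> Q"
      by (simp add: \<M>_def)
    then obtain m where "q ^ m \<in> I"
      using power_mem_if_mem_minimal_primes[OF I(1)] by blast
    then obtain P where P: "P \<in> \<P>" "q ^ m \<in> P"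
      using x_sub I(2) by blast
    with \<P> have "q \<in> P"
      using prime_ideal_power_imp_mem by blast
    with P(1) q(2) show ?thesis
      by blast
  qed
qed

theorem theorem2p4:
  fixes \<P> :: "'a::idom set set"
  assumes primes: "\<forall>P\<in>\<P>. is_prime_ideal P"
  defines "B \<equiv> (\<Inter>P\<in>\<P>. loc_at_prime P)"
  shows "(is_localization B \<longleftrightarrow>
           (\<forall>x. x \<notin> Aset \<and> conductor x \<subseteq> \<Union>\<P> \<longrightarrow> (\<exists>P\<in>\<P>. conductor x \<subseteq> P)))
       \<and> ((\<forall>c::'a. finite {Q. associated_prime Q (principal_ideal c)}) \<longrightarrow>
           (is_localization B \<longleftrightarrow>
             (\<forall>Q. (\<exists>c. associated_prime Q (principal_ideal c)) \<and> Q \<subseteq> \<Union>\<P>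
                  \<longrightarrow> (\<exists>P\<in>\<P>. Q \<subseteq> P))))"
proof -
  have "is_localization B \<longleftrightarrow> conductors_packed \<P>"
    unfolding B_def
    using localization_imp_conductors_packed conductors_packed_imp_localization primes by blast
  moreover have "conductors_packed \<P> \<longleftrightarrow> assoc_primes_packed \<P>"
    if "\<forall>c::'a. finite {Q. associated_prime Q (principal_ideal c)}"
    using that primes conductors_packed_imp_assoc_primes_packed
      assoc_primes_packed_imp_conductors_packed by blast
  ultimately show ?thesis
    unfolding conductors_packed_def assoc_primes_packed_def by blast
qed

end
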